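(* Let $G=(V,E)$ be a split graph with a split partition $(C,I)$. Let $E_S$ be the set of strong edges in an optimal solution for MaxSTC on $G$ and let $I_W$ be the vertices of $I$ that are incident to at least one edge of $E_S$. \begin{enumerate} \item If every vertex of $I_W$ misses at least three vertices of $C$ in $G$ then $E_S = E(C)$. \item If every vertex of $I_W$ misses exactly one vertex of $C$ in $G$ then $|E_S| \leq |E(C)| + \lfloor\frac{|I_W|}{2}\rfloor$. \end{enumerate}
   Context: A strong-weak labeling of the edges of a graph $G$ assigns each edge the label strong or weak; it satisfies the strong triadic closure if for any two strong edges $\{u,v\}$ and $\{v,w\}$ the edge $\{u,w\}$ exists in $G$. MaxSTC is the problem of finding a strong-weak labeling satisfying the strong triadic closure with the maximum number of strong edges. A split graph is a graph whose vertex set can be partitioned into a clique $C$ and an independent set $I$ (a split partition $(C,I)$). A vertex $u$ misses a vertex $v$ if $\{u,v\}\notin E(G)$. $E(C)$ denotes the set of edges with both endpoints in $C$. *)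

theory Defs
  imports Main
begin

definition simple_graph :: "'a set \<Rightarrow> 'a set set \<Rightarrow> bool" where
  "simple_graph V E \<longleftrightarrow> finite V \<and>
     (\<forall>e\<in>E. \<exists>u v. e = {u, v} \<and> u \<in> V \<and> v \<in> V \<and> u \<noteq> v)"

definition is_clique :: "'a set set \<Rightarrow> 'a set \<Rightarrow> bool" where
  "is_clique E C \<longleftrightarrow> (\<forall>u\<in>C. \<forall>v\<in>C. u \<noteq> v \<longrightarrow> {u, v} \<in> E)"

definition is_independent :: "'a set set \<Rightarrow> 'a set \<Rightarrow> bool" where
  "is_independent E I \<longleftrightarrow> (\<forall>u\<in>I. \<forall>v\<in>I. {u, v} \<notin> E)"

definition split_partition :: "'a set \<Rightarrow> 'a set set \<Rightarrow> 'a set \<Rightarrow> 'a set \<Rightarrow> bool" where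
  "split_partition V E C I \<longleftrightarrow> C \<union> I = V \<and> C \<inter> I = {} \<and> is_clique E C \<and> is_independent E I"

text \<open>A strong-weak labeling is identified with its set S of strong edges (S \<subseteq> E).
  It satisfies the strong triadic closure if any two (distinct) strong edges {u,v},{v,w}
  have {u,w} \<in> E.\<close>
definition stc :: "'a set set \<Rightarrow> 'a set set \<Rightarrow> bool" where
  "stc E S \<longleftrightarrow> S \<subseteq> E \<and>
     (\<forall>u v w. {u, v} \<in> S \<and> {v, w} \<in> S \<and> u \<noteq> w \<longrightarrow> {u, w} \<in> E)"

definition maxstc_optimal :: "'a set set \<Rightarrow> 'a set set \<Rightarrow> bool" where
  "maxstc_optimal E S \<longleftrightarrow> stc E S \<and> (\<forall>S'. stc E S' \<longrightarrow> card S' \<le> card S)"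

definition misses :: "'a set set \<Rightarrow> 'a \<Rightarrow> 'a \<Rightarrow> bool" where
  "misses E u v \<longleftrightarrow> {u, v} \<notin> E"

definition edges_within :: "'a set set \<Rightarrow> 'a set \<Rightarrow> 'a set set" where
  "edges_within E C = {e \<in> E. e \<subseteq> C}"

definition incident_vertices :: "'a set \<Rightarrow> 'a set set \<Rightarrow> 'a set" where
  "incident_vertices I S = {x \<in> I. \<exists>e\<in>S. x \<in> e}"

end

theory Submission
  imports Defs
begin

text \<open>Every clique vertex \<open>c\<close> has at most one strong neighbour \<open>p(c)\<close> in \<open>I\<close>, since two of them
  would be adjacent by the closure. Hence the strong edges outside \<open>E(C)\<close> are in bijection with
  the set \<open>A\<close> of clique vertices that have such a neighbour, and \<open>|E_S| + |W| = |E(C)| + |A|\<close>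
  where \<open>W\<close> is the set of weak edges of \<open>E(C)\<close>. If \<open>p(c)\<close> misses \<open>m \<in> C\<close>, then \<open>cm\<close> is weak.
  When each \<open>p(c)\<close> misses three clique vertices, double counting gives \<open>3|A| \<le> 2|W|\<close>, while
  optimality (\<open>E(C)\<close> itself satisfies the closure) gives \<open>|W| \<le> |A|\<close>; so \<open>A\<close> is empty.
  When each \<open>p(c)\<close> misses exactly one vertex \<open>m(c)\<close>, the weak edges \<open>{c, m(c)}\<close> coincide only
  in pairs with \<open>m(m(c)) = c\<close>, and \<open>p\<close> is injective on the vertices of such pairs, so
  \<open>|A| \<le> |W| + |I_W| div 2\<close>.\<close>

lemma simple_graph_finite_edges:
  assumes "simple_graph V E"
  shows "finite E"
proof -
  have "E \<subseteq> Pow V"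
  proof
    fix e assume "e \<in> E"
    then obtain u v where "e = {u, v}" "u \<in> V" "v \<in> V"
      using assms unfolding simple_graph_def by meson
    then show "e \<in> Pow V" by simp
  qed
  moreover have "finite V"
    using assms unfolding simple_graph_def by simp
  ultimately show ?thesis
    by (meson finite_Pow_iff finite_subset)
qed

lemma stc_edges_within_clique:
  assumes "is_clique E C"
  shows "stc E (edges_within E C)"
  using assms unfolding stc_def is_clique_def edges_within_def by auto

lemma card_ordered_pairs_le:
  assumes "finite W"
  shows "card {(a, b). {a, b} \<in> W} \<le> 2 * card W"
proof -
  define P where "P w = {(a, b). {a, b} = w}" for w :: "'a set"
  have P_bound: "finite (P w) \<and> card (P w) \<le> 2" for w
  proof (cases "P w = {}")
    case False
    then obtain u v where "w = {u, v}" unfolding P_def by blast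
    then have "P w \<subseteq> {(u, v), (v, u)}"
      unfolding P_def by (auto simp: doubleton_eq_iff)
    moreover have "card {(u, v), (v, u)} \<le> 2"
      by (simp add: card_insert_le_m1)
    ultimately show ?thesis
      by (meson card_mono finite.emptyI finite.insertI le_trans finite_subset)
  qed simp
  have "{(a, b). {a, b} \<in> W} = (\<Union>w\<in>W. P w)"
    unfolding P_def by auto
  then have "card {(a, b). {a, b} \<in> W} \<le> (\<Sum>w\<in>W. card (P w))"
    using card_UN_le[OF assms] by simp
  also have "\<dots> \<le> 2 * card W"
    using sum_mono[of W "\<lambda>w. card (P w)" "\<lambda>_. 2"] P_bound by simp
  finally show ?thesis .
qed

lemma card_mutual_pairs:
  fixes g :: "'a \<Rightarrow> 'a"
  assumes "finite P" and mutual: "\<And>a. a \<in> P \<Longrightarrow> g a \<in> P \<and> g (g a) = a \<and> g a \<noteq> a"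
  shows "2 * card ((\<lambda>a. {a, g a}) ` P) = card P"
proof -
  let ?\<phi> = "\<lambda>a. {a, g a}"
  have same_pair: "?\<phi> d = ?\<phi> a" if "a \<in> P" "d \<in> ?\<phi> a" for a d
    using that mutual[OF that(1)] by auto
  have "2 * card (?\<phi> ` P) = card (\<Union> (?\<phi> ` P))"
  proof (rule card_partition)
    show "card c = 2" if "c \<in> ?\<phi> ` P" for c
      using that mutual by (auto simp: card_2_iff)
    show "c1 \<inter> c2 = {}" if "c1 \<in> ?\<phi> ` P" "c2 \<in> ?\<phi> ` P" "c1 \<noteq> c2" for c1 c2
      using that same_pair by blast
  qed (use assms(1) in auto)
  moreover have "\<Union> (?\<phi> ` P) = P"
    using mutual by auto
  ultimately show ?thesis by simp
qed

text \<open>\<open>P\<close> is the set of points on 2-cycles of \<open>g\<close>, exactly where \<open>\<lambda>a. {a, g a}\<close> is two-to-one.\<close>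

lemma card_eq_card_doubleton_image:
  fixes g :: "'a \<Rightarrow> 'a"
  assumes "finite A" and "\<And>a. a \<in> A \<Longrightarrow> g a \<noteq> a"
  defines "P \<equiv> {a \<in> A. g a \<in> A \<and> g (g a) = a}"
  shows "card A = card ((\<lambda>a. {a, g a}) ` A) + card P div 2"
proof -
  let ?\<phi> = "\<lambda>a. {a, g a}"
  have "finite P" and "P \<subseteq> A"
    using assms(1) unfolding P_def by auto
  have inj: "inj_on ?\<phi> (A - P)"
    by (rule inj_onI) (auto simp: P_def doubleton_eq_iff)
  have disj: "?\<phi> ` (A - P) \<inter> ?\<phi> ` P = {}"
    by (auto simp: P_def doubleton_eq_iff)
  have "2 * card (?\<phi> ` P) = card P"
    by (rule card_mutual_pairs) (use \<open>finite P\<close> assms(2) in \<open>auto simp: P_def\<close>)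
  moreover have "?\<phi> ` A = ?\<phi> ` (A - P) \<union> ?\<phi> ` P"
    using \<open>P \<subseteq> A\<close> by blast
  then have "card (?\<phi> ` A) = card (A - P) + card (?\<phi> ` P)"
    using disj inj assms(1) \<open>finite P\<close> by (simp add: card_Un_disjoint card_image)
  moreover have "card A = card (A - P) + card P"
    using \<open>P \<subseteq> A\<close> assms(1) \<open>finite P\<close> by (metis card_Diff_subset card_mono le_add_diff_inverse2)
  ultimately show ?thesis by linarith
qed

locale split_graph_stc =
  fixes V C I :: "'a set" and E S :: "'a set set"
  assumes graph: "simple_graph V E"
    and split: "split_partition V E C I"
    and stc: "stc E S"
begin

lemma finite_edges: "finite E"
  using graph by (rule simple_graph_finite_edges)

lemma finite_clique: "finite C" and finite_independent: "finite I"
  using graph split unfolding simple_graph_def split_partition_def by auto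

lemma clique_disjoint: "C \<inter> I = {}"
  using split unfolding split_partition_def by blast

lemma clique_edge: "u \<in> C \<Longrightarrow> v \<in> C \<Longrightarrow> u \<noteq> v \<Longrightarrow> {u, v} \<in> E"
  using split unfolding split_partition_def is_clique_def by blast

lemma independent_no_edge: "u \<in> I \<Longrightarrow> v \<in> I \<Longrightarrow> {u, v} \<notin> E"
  using split unfolding split_partition_def is_independent_def by blast

lemma strong_subset: "S \<subseteq> E"
  using stc unfolding stc_def by blast

lemma strong_closure: "{u, v} \<in> S \<Longrightarrow> {v, w} \<in> S \<Longrightarrow> u \<noteq> w \<Longrightarrow> {u, w} \<in> E"
  using stc unfolding stc_def by blast

lemma strong_partner_unique:
  assumes "c \<in> C" "x \<in> I" "y \<in> I" "{x, c} \<in> S" "{y, c} \<in> S"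
  shows "x = y"
proof (rule ccontr)
  assume "x \<noteq> y"
  moreover have "{c, y} \<in> S"
    using assms(5) by (simp add: insert_commute)
  ultimately have "{x, y} \<in> E"
    using strong_closure assms(4) by blast
  then show False
    using independent_no_edge assms(2,3) by blast
qed

definition attached :: "'a set" where
  "attached = {c \<in> C. \<exists>x\<in>I. {x, c} \<in> S}"

lemma finite_attached: "finite attached"
  using finite_clique unfolding attached_def by simp

definition partner :: "'a \<Rightarrow> 'a" where
  "partner c = (THE x. x \<in> I \<and> {x, c} \<in> S)"

definition weak_clique_edges :: "'a set set" where
  "weak_clique_edges = edges_within E C - S"

lemma partner_eqI: "x \<in> I \<Longrightarrow> c \<in> C \<Longrightarrow> {x, c} \<in> S \<Longrightarrow> partner c = x"
  unfolding partner_def using strong_partner_unique by (intro the_equality) auto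

lemma partner:
  assumes "c \<in> attached"
  shows "c \<in> C" and "partner c \<in> I" and "{partner c, c} \<in> S"
  using assms partner_eqI unfolding attached_def by auto

lemma partner_incident: "c \<in> attached \<Longrightarrow> partner c \<in> incident_vertices I S"
  using partner unfolding incident_vertices_def by blast

lemma weak_clique_edge_if_partner_misses:
  assumes "c \<in> attached" "m \<in> C" "misses E (partner c) m"
  shows "c \<noteq> m" and "{c, m} \<in> weak_clique_edges"
proof -
  show "c \<noteq> m"
    using assms partner(3) strong_subset unfolding misses_def by blast
  then have "{c, m} \<in> E"
    using clique_edge partner(1) assms by blast
  moreover have "partner c \<noteq> m"
    using partner(2) assms(1,2) clique_disjoint by blast
  then have "{c, m} \<notin> S"
    using strong_closure partner(3) assms unfolding misses_def by blast
  ultimately show "{c, m} \<in> weak_clique_edges"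
    using partner(1) assms unfolding weak_clique_edges_def edges_within_def by auto
qed

lemma strong_cross_edges: "S - edges_within E C = (\<lambda>c. {partner c, c}) ` attached"
proof
  show "S - edges_within E C \<subseteq> (\<lambda>c. {partner c, c}) ` attached"
  proof
    fix t assume t: "t \<in> S - edges_within E C"
    then obtain u v where uv: "t = {u, v}" "u \<in> C \<union> I" "v \<in> C \<union> I"
      using strong_subset graph split unfolding simple_graph_def split_partition_def by blast
    then have "\<not> (u \<in> C \<and> v \<in> C)" and "\<not> (u \<in> I \<and> v \<in> I)"
      using t strong_subset independent_no_edge unfolding edges_within_def by auto
    then obtain x c where "x \<in> I" "c \<in> C" "t = {x, c}"
      using uv by (auto simp: insert_commute)
    then show "t \<in> (\<lambda>c. {partner c, c}) ` attached"
      using t partner_eqI unfolding attached_def by auto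
  qed
  show "(\<lambda>c. {partner c, c}) ` attached \<subseteq> S - edges_within E C"
    using partner clique_disjoint unfolding edges_within_def by auto
qed

lemma card_strong_cross_edges: "card (S - edges_within E C) = card attached"
proof -
  have "inj_on (\<lambda>c. {partner c, c}) attached"
  proof (rule inj_onI)
    fix a b assume ab: "a \<in> attached" "b \<in> attached" "{partner a, a} = {partner b, b}"
    then have "partner a \<notin> C" "a \<in> C" "b \<in> C"
      using partner clique_disjoint by blast+
    then show "a = b"
      using ab(3) by (metis doubleton_eq_iff)
  qed
  then show ?thesis
    by (simp add: strong_cross_edges card_image)
qed

lemma card_strong_add_card_weak:
  "card S + card weak_clique_edges = card (edges_within E C) + card attached"
proof -
  have "finite S" "finite (edges_within E C)"
    using finite_edges strong_subset finite_subset unfolding edges_within_def by auto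
  then have "card S = card (S \<inter> edges_within E C) + card (S - edges_within E C)"
    and "card (edges_within E C) = card (S \<inter> edges_within E C) + card weak_clique_edges"
    unfolding weak_clique_edges_def by (metis card_Int_Diff inf_commute)+
  then show ?thesis
    using card_strong_cross_edges by simp
qed

lemma three_card_attached_le:
  assumes "\<forall>c\<in>attached. 3 \<le> card {m \<in> C. misses E (partner c) m}"
  shows "3 * card attached \<le> 2 * card weak_clique_edges"
proof -
  define M where "M c = {m \<in> C. misses E (partner c) m}" for c
  have "finite attached" "\<forall>c\<in>attached. finite (M c)"
    using finite_attached finite_clique unfolding M_def by auto
  then have "card (Sigma attached M) = (\<Sum>c\<in>attached. card (M c))"
    by (rule card_SigmaI)
  also have "\<dots> \<ge> 3 * card attached"
    using sum_bounded_below[of attached 3 "\<lambda>c. card (M c)"] assms unfolding M_def by simp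
  finally have "3 * card attached \<le> card (Sigma attached M)" .
  also have "\<dots> \<le> card {(a, b). {a, b} \<in> weak_clique_edges}"
  proof (rule card_mono)
    have "{(a, b). {a, b} \<in> weak_clique_edges} \<subseteq> C \<times> C"
      unfolding weak_clique_edges_def edges_within_def by auto
    then show "finite {(a, b). {a, b} \<in> weak_clique_edges}"
      using finite_clique finite_subset by blast
    show "Sigma attached M \<subseteq> {(a, b). {a, b} \<in> weak_clique_edges}"
      using weak_clique_edge_if_partner_misses(2) unfolding M_def by auto
  qed
  also have "\<dots> \<le> 2 * card weak_clique_edges"
    using finite_edges unfolding weak_clique_edges_def edges_within_def
    by (intro card_ordered_pairs_le) simp
  finally show ?thesis .
qed

lemma card_attached_le:
  assumes "\<forall>c\<in>attached. card {m \<in> C. misses E (partner c) m} = 1"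
  shows "card attached \<le> card weak_clique_edges + card (incident_vertices I S) div 2"
proof -
  define miss where "miss c = the_elem {m \<in> C. misses E (partner c) m}" for c
  have missed: "{m \<in> C. misses E (partner c) m} = {miss c}" if "c \<in> attached" for c
  proof -
    have "card {m \<in> C. misses E (partner c) m} = 1"
      using assms that by blast
    then obtain m where "{m \<in> C. misses E (partner c) m} = {m}"
      by (rule card_1_singletonE)
    then show ?thesis
      unfolding miss_def by simp
  qed
  have miss: "miss c \<noteq> c" "{c, miss c} \<in> weak_clique_edges" if "c \<in> attached" for c
  proof -
    have "miss c \<in> C" "misses E (partner c) (miss c)"
      using missed[OF that] by blast+
    from weak_clique_edge_if_partner_misses[OF that this]
    show "miss c \<noteq> c" "{c, miss c} \<in> weak_clique_edges"
      by auto
  qed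
  define P where "P = {c \<in> attached. miss c \<in> attached \<and> miss (miss c) = c}"
  have "card attached = card ((\<lambda>c. {c, miss c}) ` attached) + card P div 2"
    unfolding P_def using finite_attached miss(1) by (rule card_eq_card_doubleton_image)
  moreover have "card ((\<lambda>c. {c, miss c}) ` attached) \<le> card weak_clique_edges"
  proof (rule card_mono)
    show "finite weak_clique_edges"
      using finite_edges unfolding weak_clique_edges_def edges_within_def by simp
    show "(\<lambda>c. {c, miss c}) ` attached \<subseteq> weak_clique_edges"
      using miss(2) by blast
  qed
  moreover have "card P \<le> card (incident_vertices I S)"
  proof -
    have "inj_on partner P"
    proof (rule inj_onI)
      fix a b assume ab: "a \<in> P" "b \<in> P" "partner a = partner b"
      then have "{miss a} = {miss b}"
        using missed[of a] missed[of b] unfolding P_def by simp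
      then show "a = b"
        using ab(1,2) unfolding P_def by (metis (mono_tags, lifting) mem_Collect_eq singleton_inject)
    qed
    moreover have "partner ` P \<subseteq> incident_vertices I S"
      using partner_incident unfolding P_def by blast
    moreover have "finite (incident_vertices I S)"
      using finite_independent unfolding incident_vertices_def by simp
    ultimately show ?thesis
      using card_inj_on_le by blast
  qed
  ultimately show ?thesis
    using div_le_mono[of "card P" "card (incident_vertices I S)" 2] by linarith
qed

lemma eq_edges_within_if_misses_three:
  assumes "card (edges_within E C) \<le> card S"
    and "\<forall>x\<in>incident_vertices I S. 3 \<le> card {c \<in> C. misses E x c}"
  shows "S = edges_within E C"
proof -
  have "3 * card attached \<le> 2 * card weak_clique_edges"
    using assms(2) partner_incident by (intro three_card_attached_le) blast
  moreover have "card weak_clique_edges \<le> card attached"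
    using card_strong_add_card_weak assms(1) by linarith
  ultimately have "card attached = 0"
    by linarith
  then have "attached = {}"
    using finite_attached by simp
  then have "S \<subseteq> edges_within E C"
    using strong_cross_edges by blast
  moreover have "finite (edges_within E C)"
    using finite_edges unfolding edges_within_def by simp
  ultimately show ?thesis
    using assms(1) card_seteq by blast
qed

lemma card_le_if_misses_one:
  assumes "\<forall>x\<in>incident_vertices I S. card {c \<in> C. misses E x c} = 1"
  shows "card S \<le> card (edges_within E C) + card (incident_vertices I S) div 2"
proof -
  have "card attached \<le> card weak_clique_edges + card (incident_vertices I S) div 2"
    using assms partner_incident by (intro card_attached_le) blast
  then show ?thesis
    using card_strong_add_card_weak by linarith
qed

end

theorem lemma2:
  fixes V C I :: "'a set" and E ES :: "'a set set"
  assumes "simple_graph V E"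
    and "split_partition V E C I"
    and "maxstc_optimal E ES"
  shows "((\<forall>x\<in>incident_vertices I ES. card {c \<in> C. misses E x c} \<ge> 3)
            \<longrightarrow> ES = edges_within E C)
       \<and> ((\<forall>x\<in>incident_vertices I ES. card {c \<in> C. misses E x c} = 1)
            \<longrightarrow> card ES \<le> card (edges_within E C) + card (incident_vertices I ES) div 2)"
proof -
  interpret split_graph_stc V C I E ES
    using assms unfolding maxstc_optimal_def by unfold_locales auto
  have "is_clique E C"
    using assms(2) unfolding split_partition_def by simp
  then have "stc E (edges_within E C)"
    by (rule stc_edges_within_clique)
  then have "card (edges_within E C) \<le> card ES"
    using assms(3) unfolding maxstc_optimal_def by blast
  then show ?thesis
    using eq_edges_within_if_misses_three card_le_if_misses_one by blast
qed

end
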